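(* Let $\omega_1,\omega_2\in\Omega_+$ with $\omega_1\le\omega_2$ (i.e. $\omega_1(x,i)\le\omega_2(x,i)$ for all $x\in\mathbb Z$, $i\ge1$), let $-\infty\le x\le y\le z\le+\infty$ with $y\in\mathbb Z$, and let $t\in\mathbb N\cup\{\infty\}$. Then \[P_{y,\omega_1}[T_z\le T_x\wedge t]\le P_{y,\omega_2}[T_z\le T_x\wedge t].\]
   Context: Cookie environments: $\Omega_+=([1/2,1]^{\mathbb N})^{\mathbb Z}$. $P_{x,\omega}$ is the law of the nearest-neighbor process $(X_n)_{n\ge0}$ with $X_0=x$ which, on its $i$-th visit to site $z$, jumps to $z+1$ with probability $\omega(z,i)$ and to $z-1$ otherwise. $T_k=\inf\{n\ge0:X_n=k\}$ for $k\in\mathbb Z$, and $T_\infty=T_{-\infty}=\infty$. *)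

theory Defs
  imports "HOL-Probability.Probability" "HOL-Library.Extended"
begin

text \<open>Cookie environments: omega z i is the probability of jumping right on the
  i-th visit (i >= 1) to site z. Values at i = 0 are never used.\<close>

definition Omega_plus :: "(int \<Rightarrow> nat \<Rightarrow> real) set" where
  "Omega_plus = {\<omega>. \<forall>z. \<forall>i\<ge>1. 1/2 \<le> \<omega> z i \<and> \<omega> z i \<le> 1}"

text \<open>Cookie-stack construction: independent coins xi (z,i) with
  P[xi (z,i)] = omega z i; on the i-th visit to z the walk steps right iff xi (z,i).\<close>

definition coin_space :: "(int \<Rightarrow> nat \<Rightarrow> real) \<Rightarrow> (int \<times> nat \<Rightarrow> bool) measure" where
  "coin_space \<omega> = PiM UNIV (\<lambda>(z,i). measure_pmf (bernoulli_pmf (\<omega> z i)))"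

text \<open>State: current position and number of visits so far to each site
  (including the current visit).\<close>

fun walk_state :: "(int \<times> nat \<Rightarrow> bool) \<Rightarrow> int \<Rightarrow> nat \<Rightarrow> int \<times> (int \<Rightarrow> nat)" where
  "walk_state \<xi> x 0 = (x, (\<lambda>_. 0)(x := 1))"
| "walk_state \<xi> x (Suc n) =
     (let (p, c) = walk_state \<xi> x n;
          p' = (if \<xi> (p, c p) then p + 1 else p - 1)
      in (p', c(p' := c p' + 1)))"

definition walk :: "(int \<times> nat \<Rightarrow> bool) \<Rightarrow> int \<Rightarrow> nat \<Rightarrow> int" where
  "walk \<xi> x n = fst (walk_state \<xi> x n)"

definition cookie_law :: "(int \<Rightarrow> nat \<Rightarrow> real) \<Rightarrow> int \<Rightarrow> (nat \<Rightarrow> int) measure" where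
  "cookie_law \<omega> x = distr (coin_space \<omega>) (PiM UNIV (\<lambda>_. count_space UNIV)) (\<lambda>\<xi>. walk \<xi> x)"

definition hit :: "(nat \<Rightarrow> int) \<Rightarrow> int extended \<Rightarrow> enat" where
  "hit X k = (case k of Fin m \<Rightarrow> (if \<exists>n. X n = m then enat (LEAST n. X n = m) else \<infinity>)
                      | _ \<Rightarrow> \<infinity>)"

end

theory Submission
  imports Defs
begin

(* The two environments are coupled coin by coin, so that the coin deciding the i-th departure
   from z under omega1 is at most the corresponding coin under omega2 (i >= 1). It then suffices to
   show that the event is pathwise monotone in the coins. The key point: if the omega1-walk leaves
   an interval (a, b) through b at time N, then the omega2-walk leaves it through b no later.
   An edge (z, z + 1) has been crossed to the right once more than to the left iff it separates
   the start from the current position; since larger coins bring right steps forward, an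
   induction downwards from b shows that before the omega2-walk reaches b, its visits to every
   site below b are dominated by those of the omega1-walk up to time N. Summing over (a, b)
   bounds its exit time by N, and the same domination on the edge (a, a + 1) rules out an exit
   through a. Exits through the lower end are handled by reflecting the coins. *)

section \<open>Coin stacks and the walk\<close>

fun heads :: "(nat \<Rightarrow> bool) \<Rightarrow> nat \<Rightarrow> nat" where
  "heads u 0 = 0"
| "heads u (Suc k) = heads u k + (if u (Suc k) then 1 else 0)"

abbreviation tails :: "(nat \<Rightarrow> bool) \<Rightarrow> nat \<Rightarrow> nat" where
  "tails u \<equiv> heads (\<lambda>i. \<not> u i)"

lemma heads_mono: "k \<le> k' \<Longrightarrow> heads u k \<le> heads u k'"
  by (rule lift_Suc_mono_le[of "heads u"]) auto

lemma heads_le_heads: "\<forall>i\<ge>1. u i \<longrightarrow> v i \<Longrightarrow> heads u k \<le> heads v k"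
  by (induction k) auto

lemma heads_less_imp_less:
  assumes "\<forall>i\<ge>1. u i \<longrightarrow> v i" and "heads v k' < heads u k"
  shows "k' < k"
proof (rule ccontr)
  assume "\<not> k' < k"
  then have "heads u k \<le> heads v k" "heads v k \<le> heads v k'"
    using heads_le_heads[OF assms(1)] heads_mono[of k k' v] by auto
  then show False using assms(2) by simp
qed

lemma heads_le_imp_le:
  assumes "\<forall>i\<ge>1. u i \<longrightarrow> v i" and "k' = 0 \<or> v k'" and "heads v k' \<le> heads u k"
  shows "k' \<le> k"
proof (rule ccontr)
  assume "\<not> k' \<le> k"
  then obtain j where j: "k' = Suc j" "k \<le> j" by (cases k') auto
  then have "heads v k' = heads v j + 1" using assms(2) by simp
  moreover have "heads u k \<le> heads v k" "heads v k \<le> heads v j"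
    using heads_le_heads[OF assms(1)] heads_mono[OF j(2)] by auto
  ultimately show False using assms(3) by simp
qed

abbreviation visits :: "(int \<times> nat \<Rightarrow> bool) \<Rightarrow> int \<Rightarrow> nat \<Rightarrow> int \<Rightarrow> nat" where
  "visits \<xi> y n \<equiv> snd (walk_state \<xi> y n)"

definition departures :: "(int \<times> nat \<Rightarrow> bool) \<Rightarrow> int \<Rightarrow> nat \<Rightarrow> int \<Rightarrow> nat" where
  "departures \<xi> y n z = visits \<xi> y n z - (if z = walk \<xi> y n then 1 else 0)"

text \<open>The i-th departure from z is a step to the right iff the coin "\<xi> (z, i)" shows heads,
  so these count the steps from z to z + 1 and to z - 1 before time n.\<close>

definition right_steps :: "(int \<times> nat \<Rightarrow> bool) \<Rightarrow> int \<Rightarrow> nat \<Rightarrow> int \<Rightarrow> nat" where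
  "right_steps \<xi> y n z = heads (\<lambda>i. \<xi> (z, i)) (departures \<xi> y n z)"

definition left_steps :: "(int \<times> nat \<Rightarrow> bool) \<Rightarrow> int \<Rightarrow> nat \<Rightarrow> int \<Rightarrow> nat" where
  "left_steps \<xi> y n z = tails (\<lambda>i. \<xi> (z, i)) (departures \<xi> y n z)"

lemma walk_0 [simp]: "walk \<xi> y 0 = y"
  by (simp add: walk_def)

lemma walk_Suc:
  "walk \<xi> y (Suc n) =
     (if \<xi> (walk \<xi> y n, visits \<xi> y n (walk \<xi> y n)) then walk \<xi> y n + 1 else walk \<xi> y n - 1)"
  by (simp add: walk_def Let_def split: prod.splits)

lemma visits_Suc:
  "visits \<xi> y (Suc n) = (visits \<xi> y n)(walk \<xi> y (Suc n) := visits \<xi> y n (walk \<xi> y (Suc n)) + 1)"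
  by (simp add: walk_def Let_def split: prod.splits)

declare walk_state.simps(2) [simp del]

lemma walk_Suc_neq: "walk \<xi> y (Suc n) \<noteq> walk \<xi> y n"
  by (simp add: walk_Suc)

lemma visits_walk_pos: "1 \<le> visits \<xi> y n (walk \<xi> y n)"
  by (cases n) (auto simp: visits_Suc)

lemma visits_eq_0: "\<forall>k\<le>n. walk \<xi> y k \<noteq> z \<Longrightarrow> visits \<xi> y n z = 0"
  by (induction n) (auto simp: visits_Suc)

lemma visits_walk: "visits \<xi> y n (walk \<xi> y n) = Suc (departures \<xi> y n (walk \<xi> y n))"
  using visits_walk_pos[of \<xi> y n] by (simp add: departures_def)

lemma departures_0 [simp]: "departures \<xi> y 0 z = 0"
  by (simp add: departures_def)

lemma departures_Suc:
  "departures \<xi> y (Suc n) z = departures \<xi> y n z + (if z = walk \<xi> y n then 1 else 0)"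
  using visits_walk_pos[of \<xi> y n] walk_Suc_neq[of \<xi> y n]
  by (auto simp: departures_def visits_Suc)

lemma departures_le_visits: "departures \<xi> y n z \<le> visits \<xi> y n z"
  by (simp add: departures_def)

lemma right_steps_Suc:
  "right_steps \<xi> y (Suc n) z = right_steps \<xi> y n z +
     (if z = walk \<xi> y n \<and> \<xi> (walk \<xi> y n, visits \<xi> y n (walk \<xi> y n)) then 1 else 0)"
  by (simp add: right_steps_def departures_Suc visits_walk)

lemma left_steps_Suc:
  "left_steps \<xi> y (Suc n) z = left_steps \<xi> y n z +
     (if z = walk \<xi> y n \<and> \<not> \<xi> (walk \<xi> y n, visits \<xi> y n (walk \<xi> y n)) then 1 else 0)"
  by (simp add: left_steps_def departures_Suc visits_walk)

lemma last_coin_points_to_walk: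
  assumes "z \<noteq> walk \<xi> y n" and "0 < visits \<xi> y n z"
  shows "\<xi> (z, visits \<xi> y n z) \<longleftrightarrow> z < walk \<xi> y n"
  using assms
proof (induction n)
  case 0
  then show ?case by simp
next
  case (Suc n)
  have "visits \<xi> y (Suc n) z = visits \<xi> y n z"
    using Suc.prems(1) by (simp add: visits_Suc)
  then show ?case
    using Suc by (cases "z = walk \<xi> y n") (auto simp: walk_Suc)
qed

lemma right_steps_minus_left_steps:
  "int (right_steps \<xi> y n z) - int (left_steps \<xi> y n (z + 1)) =
     (if y \<le> z \<and> z < walk \<xi> y n then 1 else 0) - (if walk \<xi> y n \<le> z \<and> z < y then 1 else 0)"
proof (induction n)
  case 0
  then show ?case by (simp add: right_steps_def left_steps_def)
next
  case (Suc n)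
  then show ?case
    by (auto simp: right_steps_Suc left_steps_Suc walk_Suc)
qed

lemma sum_visits:
  assumes "finite S" and "\<forall>k\<le>n. walk \<xi> y k \<in> S"
  shows "(\<Sum>z\<in>S. visits \<xi> y n z) = n + 1"
  using assms(2)
proof (induction n)
  case 0
  then show ?case using assms(1) by (simp add: sum.delta)
next
  case (Suc n)
  have "(\<Sum>z\<in>S. visits \<xi> y (Suc n) z) =
      (\<Sum>z\<in>S. visits \<xi> y n z + (if z = walk \<xi> y (Suc n) then 1 else 0))"
    by (rule sum.cong) (auto simp: visits_Suc)
  also have "\<dots> = (\<Sum>z\<in>S. visits \<xi> y n z) + 1"
    using Suc.prems assms(1) by (simp add: sum.distrib)
  finally show ?case using Suc by simp
qed

lemma sum_visits_exit:
  assumes "finite S" and exit: "walk \<xi> y N \<notin> S" and inside: "\<forall>n<N. walk \<xi> y n \<in> S"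
  shows "(\<Sum>z\<in>S. visits \<xi> y N z) = N"
proof (cases N)
  case 0
  then show ?thesis
    using exit by (auto intro: sum.neutral)
next
  case (Suc N')
  have "(\<Sum>z\<in>S. visits \<xi> y N z) = (\<Sum>z\<in>S. visits \<xi> y N' z)"
    using exit by (intro sum.cong) (auto simp: Suc visits_Suc)
  also have "\<dots> = N"
    using sum_visits[OF \<open>finite S\<close>, of N' \<xi> y] inside Suc by simp
  finally show ?thesis .
qed

section \<open>Comparison of two walks\<close>

definition coins_le :: "(int \<times> nat \<Rightarrow> bool) \<Rightarrow> (int \<times> nat \<Rightarrow> bool) \<Rightarrow> bool" where
  "coins_le \<xi>1 \<xi>2 \<longleftrightarrow> (\<forall>z i. 1 \<le> i \<longrightarrow> \<xi>1 (z, i) \<longrightarrow> \<xi>2 (z, i))"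

text \<open>The balance of the edge (z, z + 1) turns domination of the left steps at z + 1 into
  domination of the right steps at z, which the coin order turns into domination of the visits.\<close>

lemma visits_le_below_step:
  assumes le: "coins_le \<xi>1 \<xi>2" and at_b: "walk \<xi>1 y N = b" and "z < b"
    and left: "left_steps \<xi>2 y n (z + 1) \<le> left_steps \<xi>1 y N (z + 1)"
  shows "visits \<xi>2 y n z \<le> visits \<xi>1 y N z"
proof -
  have coins_z: "\<forall>i\<ge>1. \<xi>1 (z, i) \<longrightarrow> \<xi>2 (z, i)"
    using le by (simp add: coins_le_def)
  have departures1: "departures \<xi>1 y N z = visits \<xi>1 y N z"
    using at_b \<open>z < b\<close> by (simp add: departures_def)
  have "int (right_steps \<xi>1 y N z) - int (left_steps \<xi>1 y N (z + 1)) = (if y \<le> z then 1 else 0)"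
    using right_steps_minus_left_steps[of \<xi>1 y N z] at_b \<open>z < b\<close> by simp
  moreover note right_steps_minus_left_steps[of \<xi>2 y n z]
  ultimately have right: "int (right_steps \<xi>2 y n z) + (if walk \<xi>2 y n \<le> z then 1 else 0)
      \<le> int (right_steps \<xi>1 y N z)"
    using left by (auto split: if_splits)
  show ?thesis
  proof (cases "walk \<xi>2 y n \<le> z")
    case True
    then have "departures \<xi>2 y n z < departures \<xi>1 y N z"
      using right heads_less_imp_less[OF coins_z] by (simp add: right_steps_def)
    then show ?thesis
      using departures1 by (simp add: departures_def split: if_splits)
  next
    case False
    then have "visits \<xi>2 y n z = 0 \<or> \<xi>2 (z, visits \<xi>2 y n z)"
      using last_coin_points_to_walk[of z \<xi>2 y n] by auto
    moreover have "departures \<xi>2 y n z = visits \<xi>2 y n z"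
      using False by (simp add: departures_def)
    ultimately show ?thesis
      using right False heads_le_imp_le[OF coins_z, of "visits \<xi>2 y n z"] departures1
      by (simp add: right_steps_def)
  qed
qed

lemma visits_le_below:
  assumes le: "coins_le \<xi>1 \<xi>2" and at_b: "walk \<xi>1 y N = b"
    and unvisited: "visits \<xi>2 y n b = 0" and "z \<le> b"
  shows "left_steps \<xi>2 y n z \<le> left_steps \<xi>1 y N z
    \<and> (z < b \<longrightarrow> visits \<xi>2 y n z \<le> visits \<xi>1 y N z)"
  using \<open>z \<le> b\<close>
proof (induction z rule: int_le_induct)
  case base
  then show ?case
    using unvisited departures_le_visits[of \<xi>2 y n b] by (simp add: left_steps_def)
next
  case (step z)
  have visits: "visits \<xi>2 y n (z - 1) \<le> visits \<xi>1 y N (z - 1)"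
    using visits_le_below_step[OF le at_b, of "z - 1" n] step by simp
  have "departures \<xi>2 y n (z - 1) \<le> departures \<xi>1 y N (z - 1)"
    using visits departures_le_visits[of \<xi>2 y n "z - 1"] at_b step.hyps
    by (simp add: departures_def)
  moreover have "\<forall>i\<ge>1. \<not> \<xi>2 (z - 1, i) \<longrightarrow> \<not> \<xi>1 (z - 1, i)"
    using le by (auto simp: coins_le_def)
  ultimately have "left_steps \<xi>2 y n (z - 1) \<le> left_steps \<xi>1 y N (z - 1)"
    unfolding left_steps_def by (rule order_trans[OF heads_mono heads_le_heads])
  then show ?case using visits by simp
qed

text \<open>Reaching a requires a left step from a + 1, and those are dominated by the left steps
  of the first walk, of which there are none.\<close>

lemma walk_avoids_unvisited_below:
  assumes le: "coins_le \<xi>1 \<xi>2" and at_b: "walk \<xi>1 y N = b" and "a < y" and "a < b"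
    and unvisited1: "visits \<xi>1 y N a = 0" and unvisited2: "visits \<xi>2 y m b = 0"
  shows "walk \<xi>2 y m \<noteq> a"
proof
  assume at_a: "walk \<xi>2 y m = a"
  have "right_steps \<xi>1 y N a = 0"
    using unvisited1 departures_le_visits[of \<xi>1 y N a] by (simp add: right_steps_def)
  then have "left_steps \<xi>1 y N (a + 1) = 0"
    using right_steps_minus_left_steps[of \<xi>1 y N a] at_b \<open>a < y\<close> \<open>a < b\<close> by simp
  moreover have "0 < left_steps \<xi>2 y m (a + 1)"
    using right_steps_minus_left_steps[of \<xi>2 y m a] at_a \<open>a < y\<close> by simp
  moreover have "left_steps \<xi>2 y m (a + 1) \<le> left_steps \<xi>1 y N (a + 1)"
    using visits_le_below[OF le at_b unvisited2, of "a + 1"] \<open>a < b\<close> by simp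
  ultimately show False by simp
qed

lemma exit_top_mono:
  assumes le: "coins_le \<xi>1 \<xi>2" and "a < y" and "y < b"
    and at_b: "walk \<xi>1 y N = b" and inside: "\<forall>n<N. walk \<xi>1 y n \<in> {a<..<b}"
  shows "\<exists>m\<le>N. walk \<xi>2 y m = b \<and> (\<forall>n<m. walk \<xi>2 y n \<in> {a<..<b})"
proof -
  have unvisited1: "visits \<xi>1 y N a = 0"
    using inside at_b \<open>a < y\<close> \<open>y < b\<close> by (intro visits_eq_0) (auto simp: le_less)
  have sum1: "(\<Sum>z\<in>{a<..<b}. visits \<xi>1 y N z) = N"
    using sum_visits_exit[of "{a<..<b}"] at_b inside by simp
  have less_N: "n < N" if inside2: "\<forall>k\<le>n. walk \<xi>2 y k \<in> {a<..<b}" for n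
  proof -
    have "visits \<xi>2 y n b = 0"
      using inside2 by (intro visits_eq_0) auto
    then have "\<forall>z\<in>{a<..<b}. visits \<xi>2 y n z \<le> visits \<xi>1 y N z"
      using visits_le_below[OF le at_b] by auto
    then have "(\<Sum>z\<in>{a<..<b}. visits \<xi>2 y n z) \<le> N"
      using sum_mono sum1 by metis
    then show ?thesis
      using sum_visits[of "{a<..<b}" n \<xi>2 y] inside2 by simp
  qed
  obtain m where "m \<le> N" and exit: "walk \<xi>2 y m \<notin> {a<..<b}"
    and before: "\<forall>n<m. walk \<xi>2 y n \<in> {a<..<b}"
    using less_N[of N] ex_least_nat_le[of "\<lambda>n. walk \<xi>2 y n \<notin> {a<..<b}"]
    by (metis dual_order.trans less_irrefl)
  obtain m' where m: "m = Suc m'"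
    using exit \<open>a < y\<close> \<open>y < b\<close> by (cases m) auto
  have "walk \<xi>2 y m = a \<or> walk \<xi>2 y m = b"
    using before[rule_format, of m'] exit by (auto simp: m walk_Suc)
  moreover have "walk \<xi>2 y m = b" if "walk \<xi>2 y m \<noteq> b"
  proof -
    have "visits \<xi>2 y m b = 0"
      using before that by (intro visits_eq_0) (auto simp: le_less)
    then show ?thesis
      using walk_avoids_unvisited_below[OF le at_b \<open>a < y\<close> _ unvisited1] \<open>a < y\<close> \<open>y < b\<close>
        \<open>walk \<xi>2 y m = a \<or> walk \<xi>2 y m = b\<close> by auto
  qed
  ultimately show ?thesis
    using \<open>m \<le> N\<close> before by blast
qed

definition reflect_coins :: "(int \<times> nat \<Rightarrow> bool) \<Rightarrow> int \<times> nat \<Rightarrow> bool" where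
  "reflect_coins \<xi> = (\<lambda>(z, i). \<not> \<xi> (-z, i))"

lemma walk_reflect_coins:
  "walk (reflect_coins \<xi>) (-y) n = - walk \<xi> y n
    \<and> visits (reflect_coins \<xi>) (-y) n = (\<lambda>z. visits \<xi> y n (-z))"
proof (induction n)
  case 0
  then show ?case by (auto simp: fun_eq_iff)
next
  case (Suc n)
  then have "walk (reflect_coins \<xi>) (-y) (Suc n) = - walk \<xi> y (Suc n)"
    by (simp add: walk_Suc reflect_coins_def)
  then show ?case
    using Suc by (auto simp: visits_Suc fun_eq_iff)
qed

lemma exit_bottom_antimono:
  assumes le: "coins_le \<xi>1 \<xi>2" and "a < y" and "y < b"
    and at_a: "walk \<xi>2 y N = a" and inside: "\<forall>n<N. walk \<xi>2 y n \<in> {a<..<b}"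
  shows "\<exists>m\<le>N. walk \<xi>1 y m = a \<and> (\<forall>n<m. walk \<xi>1 y n \<in> {a<..<b})"
proof -
  have "coins_le (reflect_coins \<xi>2) (reflect_coins \<xi>1)"
    using le by (auto simp: coins_le_def reflect_coins_def)
  from exit_top_mono[OF this, of "-b" "-y" "-a" N]
  show ?thesis
    using assms walk_reflect_coins by (auto simp: minus_less_iff less_minus_iff)
qed

section \<open>Hitting times\<close>

lemma walk_dist_le: "\<bar>walk \<xi> y n - y\<bar> \<le> int n"
  by (induction n) (auto simp: walk_Suc)

lemma walk_between:
  assumes "a < y" and "y < b" and "\<forall>k\<le>n. walk \<xi> y k \<noteq> a \<and> walk \<xi> y k \<noteq> b"
  shows "walk \<xi> y n \<in> {a<..<b}"
  using assms(3)
proof (induction n)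
  case 0
  then show ?case using assms(1,2) by simp
next
  case (Suc n)
  then have "walk \<xi> y n \<in> {a<..<b}" and "walk \<xi> y (Suc n) \<noteq> a" "walk \<xi> y (Suc n) \<noteq> b"
    by auto
  then show ?case by (auto simp: walk_Suc)
qed

lemma hit_Pinf [simp]: "hit X Pinf = \<infinity>"
  and hit_Minf [simp]: "hit X Minf = \<infinity>"
  by (simp_all add: hit_def)

lemma hit_Fin_eq_enat_iff: "hit X (Fin c) = enat n \<longleftrightarrow> X n = c \<and> (\<forall>k<n. X k \<noteq> c)"
proof
  assume hit: "hit X (Fin c) = enat n"
  then have ex: "\<exists>k. X k = c"
    by (auto simp: hit_def split: if_splits)
  then have least: "(LEAST k. X k = c) = n"
    using hit by (simp add: hit_def)
  show "X n = c \<and> (\<forall>k<n. X k \<noteq> c)"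
    using LeastI_ex[OF ex] not_less_Least[where P = "\<lambda>k. X k = c"] unfolding least by blast
next
  assume "X n = c \<and> (\<forall>k<n. X k \<noteq> c)"
  moreover from this have "(LEAST k. X k = c) = n"
    by (intro Least_equality) (auto simp flip: not_less)
  ultimately show "hit X (Fin c) = enat n"
    by (auto simp: hit_def)
qed

lemma hit_Fin_le_enat_iff: "hit X (Fin c) \<le> enat n \<longleftrightarrow> (\<exists>k\<le>n. X k = c)"
proof
  assume "hit X (Fin c) \<le> enat n"
  then obtain m where "hit X (Fin c) = enat m" "m \<le> n"
    by (cases "hit X (Fin c)") auto
  then show "\<exists>k\<le>n. X k = c"
    by (auto simp: hit_Fin_eq_enat_iff)
next
  assume "\<exists>k\<le>n. X k = c"
  then obtain m where "m \<le> n" "X m = c" "\<forall>k<m. X k \<noteq> c"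
    using ex_least_nat_le[of "\<lambda>k. X k = c"] by (metis order.trans)
  then show "hit X (Fin c) \<le> enat n"
    using hit_Fin_eq_enat_iff[of X c m] by simp
qed

lemma enat_le_hit_Fin_iff: "enat n \<le> hit X (Fin c) \<longleftrightarrow> (\<forall>k<n. X k \<noteq> c)"
proof (cases n)
  case (Suc m)
  have "enat n \<le> hit X (Fin c) \<longleftrightarrow> \<not> hit X (Fin c) \<le> enat m"
    by (simp add: Suc Suc_ile_eq not_le)
  then show ?thesis
    by (auto simp: Suc hit_Fin_le_enat_iff less_Suc_eq_le)
qed (simp add: zero_enat_def[symmetric])

lemma hit_walk_start: "hit (walk \<xi> y) (Fin y) = 0"
  using hit_Fin_eq_enat_iff[of "walk \<xi> y" y 0] by (simp add: zero_enat_def)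

lemma hit_top_mono:
  assumes le: "coins_le \<xi>1 \<xi>2" and "x \<le> Fin y" and "y < b"
    and hit1_b: "hit (walk \<xi>1 y) (Fin b) = enat N" and hit1_x: "enat N \<le> hit (walk \<xi>1 y) x"
  shows "hit (walk \<xi>2 y) (Fin b) \<le> enat N \<and> hit (walk \<xi>2 y) (Fin b) \<le> hit (walk \<xi>2 y) x"
proof -
  have at_b: "walk \<xi>1 y N = b" and not_b: "\<forall>n<N. walk \<xi>1 y n \<noteq> b"
    using hit1_b by (auto simp: hit_Fin_eq_enat_iff)
  obtain a where "a < y" and not_a: "\<forall>n<N. walk \<xi>1 y n \<noteq> a" and x: "x = Minf \<or> x = Fin a"
  proof (cases x)
    case (Fin a)
    have "a \<noteq> y"
      using hit1_x at_b \<open>y < b\<close> hit_walk_start[of \<xi>1 y] Fin by (auto simp: zero_enat_def)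
    then show ?thesis
      using that[of a] hit1_x \<open>x \<le> Fin y\<close> Fin by (simp add: enat_le_hit_Fin_iff)
  next
    case Minf
    have "\<forall>n<N. walk \<xi>1 y n \<noteq> y - int N - 1"
      using walk_dist_le[of \<xi>1 y] by (smt (verit) of_nat_less_iff)
    then show ?thesis using that[of "y - int N - 1"] Minf by simp
  qed (use \<open>x \<le> Fin y\<close> in simp)
  then have "\<forall>n<N. walk \<xi>1 y n \<in> {a<..<b}"
    using not_b \<open>y < b\<close> by (intro allI impI walk_between) auto
  then obtain m where "m \<le> N" and at_b2: "walk \<xi>2 y m = b"
    and inside: "\<forall>n<m. walk \<xi>2 y n \<in> {a<..<b}"
    using exit_top_mono[OF le \<open>a < y\<close> \<open>y < b\<close> at_b] by blast
  have "hit (walk \<xi>2 y) (Fin b) \<le> enat m"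
    using at_b2 by (auto simp: hit_Fin_le_enat_iff)
  moreover have "enat m \<le> hit (walk \<xi>2 y) x"
    using x inside by (auto simp: enat_le_hit_Fin_iff)
  ultimately show ?thesis
    using \<open>m \<le> N\<close> by (meson enat_ord_simps(1) order_trans)
qed

lemma hit_bottom_antimono:
  assumes le: "coins_le \<xi>1 \<xi>2" and "a < y" and "Fin y < z"
    and hit2: "hit (walk \<xi>2 y) (Fin a) < hit (walk \<xi>2 y) z"
  shows "hit (walk \<xi>1 y) (Fin a) < \<infinity>"
proof -
  obtain N where "hit (walk \<xi>2 y) (Fin a) = enat N"
    using hit2 by (cases "hit (walk \<xi>2 y) (Fin a)") auto
  then have at_a: "walk \<xi>2 y N = a" and not_a: "\<forall>n<N. walk \<xi>2 y n \<noteq> a"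
    by (auto simp: hit_Fin_eq_enat_iff)
  obtain b where "y < b" and not_b: "\<forall>n<N. walk \<xi>2 y n \<noteq> b"
  proof (cases z)
    case (Fin b)
    then have "enat N \<le> hit (walk \<xi>2 y) (Fin b)"
      using hit2 \<open>hit (walk \<xi>2 y) (Fin a) = enat N\<close> by simp
    then show ?thesis
      using that[of b] Fin \<open>Fin y < z\<close> by (simp add: enat_le_hit_Fin_iff)
  next
    case Pinf
    have "\<forall>n<N. walk \<xi>2 y n \<noteq> y + int N + 1"
      using walk_dist_le[of \<xi>2 y] by (smt (verit) of_nat_less_iff)
    then show ?thesis using that[of "y + int N + 1"] by simp
  qed (use \<open>Fin y < z\<close> in simp)
  then have "\<forall>n<N. walk \<xi>2 y n \<in> {a<..<b}"
    using not_a \<open>a < y\<close> by (intro allI impI walk_between) auto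
  then obtain m where "walk \<xi>1 y m = a"
    using exit_bottom_antimono[OF le \<open>a < y\<close> \<open>y < b\<close> at_a] by blast
  then have "hit (walk \<xi>1 y) (Fin a) \<le> enat m"
    by (auto simp: hit_Fin_le_enat_iff)
  then show ?thesis
    using enat_ord_simps(4) order.strict_trans1 by blast
qed

lemma walk_hit_event_mono:
  assumes le: "coins_le \<xi>1 \<xi>2" and "x \<le> Fin y" and "Fin y \<le> z"
    and event1: "hit (walk \<xi>1 y) z \<le> min (hit (walk \<xi>1 y) x) t"
  shows "hit (walk \<xi>2 y) z \<le> min (hit (walk \<xi>2 y) x) t"
proof (cases "z = Fin y")
  case True
  then show ?thesis by (simp add: hit_walk_start)
next
  case False
  then have "Fin y < z"
    using \<open>Fin y \<le> z\<close> by simp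
  show ?thesis
  proof (cases "hit (walk \<xi>1 y) z")
    case (enat N)
    then obtain b where z: "z = Fin b" and "y < b"
      using \<open>Fin y < z\<close> by (cases z) auto
    then show ?thesis
      using hit_top_mono[OF le \<open>x \<le> Fin y\<close> \<open>y < b\<close>, of N] enat event1
      by (auto intro: order_trans)
  next
    case infinity
    then have hit1_x: "hit (walk \<xi>1 y) x = \<infinity>" and "t = \<infinity>"
      using event1 by (auto simp: min_def split: if_splits)
    have "hit (walk \<xi>2 y) z \<le> hit (walk \<xi>2 y) x"
    proof (cases x)
      case (Fin a)
      then have "a < y"
        using \<open>x \<le> Fin y\<close> hit1_x hit_walk_start[of \<xi>1 y] by (cases "a = y") auto
      then show ?thesis
        using hit_bottom_antimono[OF le _ \<open>Fin y < z\<close>] hit1_x unfolding Fin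
        by (metis linorder_not_le less_irrefl)
    qed (use \<open>x \<le> Fin y\<close> in simp_all)
    then show ?thesis
      using \<open>t = \<infinity>\<close> by simp
  qed
qed

section \<open>Coupling the environments\<close>

text \<open>A Bernoulli(q) coin thinned by an independent Bernoulli(p/q) coin. Outside the range
  0 \<le> p \<le> q \<le> 1 the independent coupling serves as a junk value.\<close>

definition bernoulli_coupling :: "real \<Rightarrow> real \<Rightarrow> (bool \<times> bool) pmf" where
  "bernoulli_coupling p q =
     (if 0 \<le> p \<and> p \<le> q \<and> q \<le> 1 then
        bind_pmf (bernoulli_pmf q)
          (\<lambda>b. if b then map_pmf (\<lambda>a. (a, True)) (bernoulli_pmf (p / q)) else return_pmf (False, False))
      else pair_pmf (bernoulli_pmf p) (bernoulli_pmf q))"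

lemma map_fst_bernoulli_coupling: "map_pmf fst (bernoulli_coupling p q) = bernoulli_pmf p"
proof (cases "0 \<le> p \<and> p \<le> q \<and> q \<le> 1")
  case True
  have "map_pmf fst (bernoulli_coupling p q) =
      bind_pmf (bernoulli_pmf q) (\<lambda>b. if b then bernoulli_pmf (p / q) else return_pmf False)"
    using True unfolding bernoulli_coupling_def
    by (auto simp: map_bind_pmf pmf.map_comp o_def intro!: bind_pmf_cong)
  also have "\<dots> = bernoulli_pmf p"
  proof (rule pmf_eqI)
    fix c :: bool
    have "0 \<le> p / q" "p / q \<le> 1" "q * (p / q) = p"
      using True by (auto simp: divide_le_eq_1)
    then show "pmf (bind_pmf (bernoulli_pmf q)
        (\<lambda>b. if b then bernoulli_pmf (p / q) else return_pmf False)) c = pmf (bernoulli_pmf p) c"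
      using True by (cases c) (auto simp: pmf_bind algebra_simps)
  qed
  finally show ?thesis .
qed (auto simp: bernoulli_coupling_def map_fst_pair_pmf)

lemma map_snd_bernoulli_coupling: "map_pmf snd (bernoulli_coupling p q) = bernoulli_pmf q"
proof (cases "0 \<le> p \<and> p \<le> q \<and> q \<le> 1")
  case True
  have "map_pmf snd (bernoulli_coupling p q) = bind_pmf (bernoulli_pmf q) return_pmf"
    using True unfolding bernoulli_coupling_def
    by (auto simp: map_bind_pmf pmf.map_comp o_def intro!: bind_pmf_cong)
  then show ?thesis by (simp add: bind_return_pmf')
qed (auto simp: bernoulli_coupling_def map_snd_pair_pmf)

lemma bernoulli_coupling_mono:
  "0 \<le> p \<Longrightarrow> p \<le> q \<Longrightarrow> q \<le> 1 \<Longrightarrow> (a, b) \<in> set_pmf (bernoulli_coupling p q) \<Longrightarrow> a \<longrightarrow> b"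
  by (auto simp: bernoulli_coupling_def split: if_splits)

lemma distr_PiM_map_pmf:
  fixes K :: "'i \<Rightarrow> 'a pmf" and f :: "'a \<Rightarrow> 'b"
  shows "distr (PiM UNIV (\<lambda>k. measure_pmf (K k))) (PiM UNIV (\<lambda>k. count_space UNIV)) (\<lambda>\<eta> k. f (\<eta> k))
       = PiM UNIV (\<lambda>k. measure_pmf (map_pmf f (K k)))"
proof (rule measure_eqI_PiM_infinite[symmetric, where M = "\<lambda>k. measure_pmf (map_pmf f (K k))"])
  let ?C = "PiM UNIV (\<lambda>k. measure_pmf (K k))" and ?D = "PiM UNIV (\<lambda>k. measure_pmf (map_pmf f (K k)))"
  have meas: "(\<lambda>\<eta> k. f (\<eta> k)) \<in> measurable ?C (PiM UNIV (\<lambda>k. count_space UNIV))"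
    by (intro measurable_PiM_single' measurable_compose[OF measurable_component_singleton])
      (auto simp: space_PiM)
  show "sets (distr ?C (PiM UNIV (\<lambda>k. count_space UNIV)) (\<lambda>\<eta> k. f (\<eta> k))) = sets ?D"
    by (simp add: sets_PiM_cong)
  show "finite_measure ?D"
  proof -
    have "prob_space ?D"
      by (intro prob_space_PiM prob_space_measure_pmf)
    then show ?thesis by (simp add: prob_space_def)
  qed
  fix A J assume J: "finite J" and A: "\<And>i. i \<in> J \<Longrightarrow> A i \<in> sets (map_pmf f (K i))"
  let ?X = "prod_emb UNIV (\<lambda>k. measure_pmf (map_pmf f (K k))) J (Pi\<^sub>E J A)"
  have "?X \<in> sets ?D"
    using J A by (intro sets_PiM_I) auto
  moreover have "sets ?D = sets (PiM UNIV (\<lambda>k. count_space UNIV))"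
    by (rule sets_PiM_cong) auto
  ultimately have X: "?X \<in> sets (PiM UNIV (\<lambda>k. count_space UNIV))"
    by simp
  have preimage: "(\<lambda>\<eta> k. f (\<eta> k)) -` ?X \<inter> space ?C
      = prod_emb UNIV (\<lambda>k. measure_pmf (K k)) J (Pi\<^sub>E J (\<lambda>j. f -` A j))"
    by (auto simp: prod_emb_def space_PiM PiE_iff)
  have "emeasure ?D ?X = (\<Prod>j\<in>J. emeasure (map_pmf f (K j)) (A j))"
    using J by (intro emeasure_PiM_emb) (auto intro: prob_space_measure_pmf)
  also have "\<dots> = (\<Prod>j\<in>J. emeasure (K j) (f -` A j))"
    by simp
  also have "\<dots> = emeasure ?C (prod_emb UNIV (\<lambda>k. measure_pmf (K k)) J (Pi\<^sub>E J (\<lambda>j. f -` A j)))"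
    using J by (intro emeasure_PiM_emb[symmetric]) (auto intro: prob_space_measure_pmf)
  also have "\<dots> = emeasure (distr ?C (PiM UNIV (\<lambda>k. count_space UNIV)) (\<lambda>\<eta> k. f (\<eta> k))) ?X"
    using meas X by (simp add: emeasure_distr preimage)
  finally show "emeasure ?D ?X = emeasure (distr ?C (PiM UNIV (\<lambda>k. count_space UNIV)) (\<lambda>\<eta> k. f (\<eta> k))) ?X" .
qed simp_all

lemma measure_PiM_coupling_mono:
  fixes K :: "'i::countable \<Rightarrow> ('a \<times> 'a) pmf"
  assumes A: "A \<in> sets (PiM UNIV (\<lambda>_. count_space UNIV))"
    and up: "\<And>\<xi> \<eta>. (\<And>k. (\<xi> k, \<eta> k) \<in> set_pmf (K k)) \<Longrightarrow> \<xi> \<in> A \<Longrightarrow> \<eta> \<in> A"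
  shows "measure (PiM UNIV (\<lambda>k. map_pmf fst (K k))) A \<le> measure (PiM UNIV (\<lambda>k. map_pmf snd (K k))) A"
proof -
  let ?C = "PiM UNIV (\<lambda>k. measure_pmf (K k))"
  interpret C: prob_space ?C
    by (intro prob_space_PiM prob_space_measure_pmf)
  have marginal: "(\<lambda>\<eta> k. f (\<eta> k)) \<in> measurable ?C (PiM UNIV (\<lambda>k. count_space UNIV))"
    for f :: "'a \<times> 'a \<Rightarrow> 'a"
    by (intro measurable_PiM_single' measurable_compose[OF measurable_component_singleton])
      (auto simp: space_PiM)
  have measure_marginal:
    "measure (PiM UNIV (\<lambda>k. map_pmf f (K k))) A = measure ?C {\<eta>. (\<lambda>k. f (\<eta> k)) \<in> A}"
    for f :: "'a \<times> 'a \<Rightarrow> 'a"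
    using marginal A by (simp add: distr_PiM_map_pmf[symmetric] measure_distr space_PiM vimage_def)
  have support: "AE \<eta> in ?C. \<forall>k. \<eta> k \<in> set_pmf (K k)"
    unfolding AE_all_countable
    by (intro allI AE_PiM_component) (auto intro: prob_space_measure_pmf simp: AE_measure_pmf)
  have "measure ?C {\<eta>. (\<lambda>k. fst (\<eta> k)) \<in> A} \<le> measure ?C {\<eta>. (\<lambda>k. snd (\<eta> k)) \<in> A}"
  proof (rule C.finite_measure_mono_AE)
    show "AE \<eta> in ?C. \<eta> \<in> {\<eta>. (\<lambda>k. fst (\<eta> k)) \<in> A} \<longrightarrow> \<eta> \<in> {\<eta>. (\<lambda>k. snd (\<eta> k)) \<in> A}"
      using support
    proof eventually_elim
      case (elim \<eta>)
      then show ?case using up[of "\<lambda>k. fst (\<eta> k)" "\<lambda>k. snd (\<eta> k)"] by simp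
    qed
    show "{\<eta>. (\<lambda>k. snd (\<eta> k)) \<in> A} \<in> sets ?C"
      using measurable_sets[OF marginal A] by (simp add: space_PiM vimage_def)
  qed
  then show ?thesis
    by (simp add: measure_marginal)
qed

lemma measurable_count_space_compose2:
  fixes f :: "'a \<Rightarrow> 'b::countable" and g :: "'a \<Rightarrow> 'c::countable"
  assumes "f \<in> measurable M (count_space UNIV)" and "g \<in> measurable M (count_space UNIV)"
  shows "(\<lambda>x. h (f x) (g x)) \<in> measurable M (count_space UNIV)"
  by (rule measurable_compose_countable'[where f = "\<lambda>b x. h b (g x)", OF _ assms(1)])
    (auto intro: measurable_compose[OF assms(2)])

lemma measurable_walk_visits:
  assumes coins: "\<And>k. (\<lambda>\<xi>. \<xi> k) \<in> measurable M (count_space UNIV)"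
  shows "(\<lambda>\<xi>. walk \<xi> y n) \<in> measurable M (count_space UNIV)
    \<and> (\<forall>z. (\<lambda>\<xi>. visits \<xi> y n z) \<in> measurable M (count_space UNIV))"
proof (induction n)
  case 0
  then show ?case by simp
next
  case (Suc n)
  then have walk: "(\<lambda>\<xi>. walk \<xi> y n) \<in> measurable M (count_space UNIV)"
    and visits: "\<And>z. (\<lambda>\<xi>. visits \<xi> y n z) \<in> measurable M (count_space UNIV)"
    by auto
  have "(\<lambda>\<xi>. \<xi> (p, visits \<xi> y n p)) \<in> measurable M (count_space UNIV)" for p
    by (rule measurable_compose_countable'[where f = "\<lambda>i \<xi>. \<xi> (p, i)" and I = UNIV])
      (auto intro: coins visits)
  then have "(\<lambda>\<xi>. \<xi> (walk \<xi> y n, visits \<xi> y n (walk \<xi> y n))) \<in> measurable M (count_space UNIV)"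
    by (rule measurable_compose_countable'[where f = "\<lambda>p \<xi>. \<xi> (p, visits \<xi> y n p)" and I = UNIV,
          OF _ walk]) auto
  from measurable_count_space_compose2[OF this walk, of "\<lambda>b p. if b then p + 1 else p - 1"]
  have walk_Suc: "(\<lambda>\<xi>. walk \<xi> y (Suc n)) \<in> measurable M (count_space UNIV)"
    by (simp add: walk_Suc)
  have "(\<lambda>\<xi>. visits \<xi> y (Suc n) z) \<in> measurable M (count_space UNIV)" for z
  proof -
    have "(\<lambda>\<xi>. visits \<xi> y (Suc n) z)
        = (\<lambda>\<xi>. if z = walk \<xi> y (Suc n) then visits \<xi> y n z + 1 else visits \<xi> y n z)"
      by (auto simp: visits_Suc)
    then show ?thesis
      using measurable_count_space_compose2[OF walk_Suc visits, of "\<lambda>p c. if z = p then c + 1 else c"]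
      by simp
  qed
  then show ?case
    using walk_Suc by simp
qed

lemma sets_coin_space: "sets (coin_space \<omega>) = sets (PiM UNIV (\<lambda>_. count_space UNIV))"
  unfolding coin_space_def by (rule sets_PiM_cong) auto

lemma measurable_walk:
  "(\<lambda>\<xi>. walk \<xi> y) \<in> measurable (PiM UNIV (\<lambda>_. count_space UNIV)) (PiM UNIV (\<lambda>_. count_space UNIV))"
  using measurable_walk_visits[of "PiM UNIV (\<lambda>_. count_space UNIV)"]
  by (intro measurable_PiM_single') (auto simp: space_PiM)

lemma measure_cookie_law:
  assumes "E \<in> sets (PiM UNIV (\<lambda>_. count_space UNIV))"
  shows "measure (cookie_law \<omega> y) E = measure (coin_space \<omega>) {\<xi>. walk \<xi> y \<in> E}"
proof -
  have "(\<lambda>\<xi>. walk \<xi> y) \<in> measurable (coin_space \<omega>) (PiM UNIV (\<lambda>_. count_space UNIV))"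
    using measurable_walk by (simp cong: measurable_cong_sets add: sets_coin_space)
  then have "measure (cookie_law \<omega> y) E
      = measure (coin_space \<omega>) ((\<lambda>\<xi>. walk \<xi> y) -` E \<inter> space (coin_space \<omega>))"
    unfolding cookie_law_def using assms by (rule measure_distr)
  moreover have "space (coin_space \<omega>) = UNIV"
    using sets_eq_imp_space_eq[OF sets_coin_space] by (simp add: space_PiM)
  ultimately show ?thesis
    by (simp add: vimage_def)
qed

lemma measure_coin_space_mono:
  assumes bounds: "\<forall>w i. 1 \<le> i \<longrightarrow> 0 \<le> \<omega>1 w i \<and> \<omega>1 w i \<le> \<omega>2 w i \<and> \<omega>2 w i \<le> 1"
    and A: "A \<in> sets (PiM UNIV (\<lambda>_. count_space UNIV))"
    and up: "\<And>\<xi> \<eta>. coins_le \<xi> \<eta> \<Longrightarrow> \<xi> \<in> A \<Longrightarrow> \<eta> \<in> A"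
  shows "measure (coin_space \<omega>1) A \<le> measure (coin_space \<omega>2) A"
proof -
  define K where "K = (\<lambda>(w, i). bernoulli_coupling (\<omega>1 w i) (\<omega>2 w i))"
  have coin1: "coin_space \<omega>1 = PiM UNIV (\<lambda>k. map_pmf fst (K k))"
    and coin2: "coin_space \<omega>2 = PiM UNIV (\<lambda>k. map_pmf snd (K k))"
    by (auto simp: coin_space_def K_def map_fst_bernoulli_coupling map_snd_bernoulli_coupling
        intro!: PiM_cong)
  have coupled_le: "coins_le \<xi> \<eta>" if coupled: "\<And>k. (\<xi> k, \<eta> k) \<in> set_pmf (K k)" for \<xi> \<eta>
    unfolding coins_le_def
  proof (intro allI impI)
    fix w i assume "1 \<le> i" and "\<xi> (w, i)"
    then show "\<eta> (w, i)"
      using bounds bernoulli_coupling_mono[of "\<omega>1 w i" "\<omega>2 w i" "\<xi> (w, i)" "\<eta> (w, i)"]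
        coupled[of "(w, i)"]
      by (simp add: K_def)
  qed
  show ?thesis
    unfolding coin1 coin2
  proof (rule measure_PiM_coupling_mono[OF A])
    fix \<xi> \<eta> assume "\<And>k. (\<xi> k, \<eta> k) \<in> set_pmf (K k)" and "\<xi> \<in> A"
    then show "\<eta> \<in> A" by (rule up[OF coupled_le])
  qed
qed

lemma measure_cookie_law_mono:
  assumes bounds: "\<forall>w i. 1 \<le> i \<longrightarrow> 0 \<le> \<omega>1 w i \<and> \<omega>1 w i \<le> \<omega>2 w i \<and> \<omega>2 w i \<le> 1"
    and E: "E \<in> sets (PiM UNIV (\<lambda>_. count_space UNIV))"
    and up: "\<And>\<xi> \<eta>. coins_le \<xi> \<eta> \<Longrightarrow> walk \<xi> y \<in> E \<Longrightarrow> walk \<eta> y \<in> E"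
  shows "measure (cookie_law \<omega>1 y) E \<le> measure (cookie_law \<omega>2 y) E"
proof -
  have "{\<xi>. walk \<xi> y \<in> E} \<in> sets (PiM UNIV (\<lambda>_. count_space UNIV))"
    using measurable_sets[OF measurable_walk E] by (simp add: space_PiM vimage_def)
  then have "measure (coin_space \<omega>1) {\<xi>. walk \<xi> y \<in> E} \<le> measure (coin_space \<omega>2) {\<xi>. walk \<xi> y \<in> E}"
    using bounds up by (intro measure_coin_space_mono) auto
  then show ?thesis
    using E by (simp add: measure_cookie_law)
qed

theorem mainTheorem15:
  fixes \<omega>1 \<omega>2 :: "int \<Rightarrow> nat \<Rightarrow> real" and x z :: "int extended" and y :: int and t :: enat
  assumes "\<omega>1 \<in> Omega_plus" and "\<omega>2 \<in> Omega_plus"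
    and "\<forall>w. \<forall>i\<ge>1. \<omega>1 w i \<le> \<omega>2 w i"
    and "x \<le> Fin y" and "Fin y \<le> z"
  shows "measure (cookie_law \<omega>1 y) {X \<in> space (cookie_law \<omega>1 y). hit X z \<le> min (hit X x) t}
       \<le> measure (cookie_law \<omega>2 y) {X \<in> space (cookie_law \<omega>2 y). hit X z \<le> min (hit X x) t}"
proof -
  let ?S = "PiM UNIV (\<lambda>_::nat. count_space (UNIV :: int set))"
  define E where "E = {X \<in> space ?S. hit X z \<le> min (hit X x) t}"
  have event: "{X \<in> space (cookie_law \<omega> y). hit X z \<le> min (hit X x) t} = E" for \<omega>
    by (simp add: E_def cookie_law_def)
  have bounds: "\<forall>w i. 1 \<le> i \<longrightarrow> 0 \<le> \<omega>1 w i \<and> \<omega>1 w i \<le> \<omega>2 w i \<and> \<omega>2 w i \<le> 1"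
  proof (intro allI impI)
    fix w i assume "1 \<le> (i::nat)"
    then have "1/2 \<le> \<omega>1 w i" "\<omega>1 w i \<le> \<omega>2 w i" "\<omega>2 w i \<le> 1"
      using assms(1-3) unfolding Omega_plus_def by blast+
    then show "0 \<le> \<omega>1 w i \<and> \<omega>1 w i \<le> \<omega>2 w i \<and> \<omega>2 w i \<le> 1"
      by linarith
  qed
  show ?thesis
  proof (cases "E \<in> sets ?S")
    case True
    then show ?thesis
      unfolding event using walk_hit_event_mono[OF _ assms(4,5), where t = t]
      by (intro measure_cookie_law_mono[OF bounds]) (auto simp: E_def space_PiM)
  qed (unfold event, simp add: cookie_law_def measure_notin_sets)
qed

end
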